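(* Let $R>0$, $K>0$. Then \[ E_e(R,K)=\max_P\ \sup_{0\le\eta\le\rho}\big\{E_0(\rho,\eta,P)-\rho R-\eta K\big\}, \] where \[ E_e(R,K)=\max_P\ \min_{U:\ I_{PU}+|B_{PU}-K|^{+}\le R} D(U\|W|P),\qquad E_0(\rho,\eta,P)=-\log\sum_y\Big[\sum_x P(x)W^{\frac{1+\eta}{1+\rho}}(y|x)\Big]^{1+\rho}. \]
   Context: $\mathcal{X},\mathcal{Y}$ are finite alphabets and $W(y|x)$ is a conditional distribution on $\mathcal{Y}$ given $\mathcal{X}$. Logs are natural. $P$ ranges over distributions on $\mathcal{X}$, $U(y|x)$ over conditional distributions; $PU$ is the joint distribution $P(x)U(y|x)$. $D(U\|W|P)=\sum P(x)U(y|x)\log\frac{U(y|x)}{W(y|x)}$; $I_{PU}$ is the mutual information under $PU$; $B_{PU}=\mathbb{E}_{PU}[-\log W(Y|X)]$; $|t|^{+}=\max\{0,t\}$; a minimum over an empty set is $+\infty$. The supremum is over all real $\rho,\eta$ with $0\le\eta\le\rho$. *)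

theory Defs
  imports "HOL-Analysis.Analysis" "HOL-Library.Extended_Real"
begin

definition is_dist :: "('a::finite \<Rightarrow> real) \<Rightarrow> bool" where
  "is_dist P \<longleftrightarrow> (\<forall>x. 0 \<le> P x) \<and> (\<Sum>x\<in>UNIV. P x) = 1"

definition is_channel :: "('a::finite \<Rightarrow> 'b::finite \<Rightarrow> real) \<Rightarrow> bool" where
  "is_channel U \<longleftrightarrow> (\<forall>x. is_dist (U x))"

definition out_marg :: "('a::finite \<Rightarrow> real) \<Rightarrow> ('a \<Rightarrow> 'b::finite \<Rightarrow> real) \<Rightarrow> 'b \<Rightarrow> real" where
  "out_marg P U y = (\<Sum>x\<in>UNIV. P x * U x y)"

definition cond_div :: "('a::finite \<Rightarrow> real) \<Rightarrow> ('a \<Rightarrow> 'b::finite \<Rightarrow> real) \<Rightarrow> ('a \<Rightarrow> 'b \<Rightarrow> real) \<Rightarrow> ereal" where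
  "cond_div P U W =
     (if \<exists>x y. P x * U x y > 0 \<and> W x y = 0 then \<infinity>
      else ereal (\<Sum>x\<in>UNIV. \<Sum>y\<in>UNIV.
              (if P x * U x y = 0 then 0 else P x * U x y * ln (U x y / W x y))))"

definition mut_info :: "('a::finite \<Rightarrow> real) \<Rightarrow> ('a \<Rightarrow> 'b::finite \<Rightarrow> real) \<Rightarrow> real" where
  "mut_info P U = (\<Sum>x\<in>UNIV. \<Sum>y\<in>UNIV.
      (if P x * U x y = 0 then 0 else P x * U x y * ln (U x y / out_marg P U y)))"

definition B_PU :: "('a::finite \<Rightarrow> real) \<Rightarrow> ('a \<Rightarrow> 'b::finite \<Rightarrow> real) \<Rightarrow> ('a \<Rightarrow> 'b \<Rightarrow> real) \<Rightarrow> ereal" where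
  "B_PU P U W =
     (if \<exists>x y. P x * U x y > 0 \<and> W x y = 0 then \<infinity>
      else ereal (\<Sum>x\<in>UNIV. \<Sum>y\<in>UNIV.
              (if P x * U x y = 0 then 0 else P x * U x y * (- ln (W x y)))))"

definition E_e :: "('a::finite \<Rightarrow> 'b::finite \<Rightarrow> real) \<Rightarrow> real \<Rightarrow> real \<Rightarrow> ereal" where
  "E_e W R K =
     (SUP P\<in>{P. is_dist P}.
        INF U\<in>{U. is_channel U \<and>
                  ereal (mut_info P U) + max 0 (B_PU P U W - ereal K) \<le> ereal R}.
          cond_div P U W)"

definition E_0 :: "('a::finite \<Rightarrow> 'b::finite \<Rightarrow> real) \<Rightarrow> real \<Rightarrow> real \<Rightarrow> ('a \<Rightarrow> real) \<Rightarrow> real" where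
  "E_0 W \<rho> \<eta> P =
     - ln (\<Sum>y\<in>UNIV. (\<Sum>x\<in>UNIV. P x * W x y powr ((1 + \<eta>) / (1 + \<rho>))) powr (1 + \<rho>))"

end

theory Submission
  imports Defs "HOL-Real_Asymp.Real_Asymp"
begin

(* Weak duality: for a channel U with PU << PW, the log-sum inequality for PU against
   P(x) W(y|x)^((1+eta)/(1+rho)) q(y)^(rho/(1+rho)), q the output distribution of PU, followed by
   Hoelder's inequality, gives E_0(rho,eta,P) <= D(U||W|P) + rho I_PU + eta B_PU, and on the
   feasible set the right-hand side is at most D(U||W|P) + rho R + eta K.
   Strong duality: for fixed P the objective and both constraints are convex-like and continuous on
   the compact set of channels with PU << PW, so a separating hyperplane provides Lagrange multipliers
   rho, eta.  The Lagrangian is then dominated by E_0(rho,eta,P') for a maximiser P' of E_0: the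
   tilted channel U(y|x) ~ W(y|x)^((1+eta)/(1+rho)) alpha(y)^rho, alpha the output of P' under
   W^((1+eta)/(1+rho)), attains this bound because the optimality conditions of P' are exactly what
   is needed. *)

lemma continuous_on_x_ln_x: "continuous_on {0..} (\<lambda>u::real. u * ln u)"
proof (clarsimp simp: continuous_on_eq_continuous_within)
  fix x :: real assume "0 \<le> x"
  show "continuous (at x within {0..}) (\<lambda>u. u * ln u)"
  proof (cases "x = 0")
    case True
    have "{0::real..} - {0} = {0<..}" by auto
    then have "at (0::real) within {0..} = at_right 0" by (simp add: at_within_def)
    moreover have "((\<lambda>u::real. u * ln u) \<longlongrightarrow> 0) (at_right 0)" by real_asymp
    ultimately show ?thesis using True by (simp add: continuous_within)
  next
    case False
    with \<open>0 \<le> x\<close> show ?thesis by (intro continuous_intros) auto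
  qed
qed

lemma continuous_on_x_ln_x_div:
  assumes "0 \<le> w" shows "continuous_on {0..} (\<lambda>u::real. u * ln (u / w))"
proof (cases "w = 0")
  case False
  have "continuous_on {0..} (\<lambda>u::real. u * ln u - u * ln w)"
    by (intro continuous_intros continuous_on_x_ln_x)
  moreover have "u * ln u - u * ln w = u * ln (u / w)" if "u \<in> {0..}" for u
    using that assms False by (cases "u = 0") (auto simp: ln_div algebra_simps)
  ultimately show ?thesis by (rule continuous_on_eq)
qed simp

lemma log_sum_inequality:
  fixes a b :: "'i \<Rightarrow> real"
  assumes "finite S" and a: "\<And>i. i \<in> S \<Longrightarrow> 0 \<le> a i" and b: "\<And>i. i \<in> S \<Longrightarrow> 0 \<le> b i"
    and ab: "\<And>i. i \<in> S \<Longrightarrow> b i = 0 \<Longrightarrow> a i = 0"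
  shows "(\<Sum>i\<in>S. a i) * ln ((\<Sum>i\<in>S. a i) / (\<Sum>i\<in>S. b i)) \<le> (\<Sum>i\<in>S. a i * ln (a i / b i))"
proof -
  define A B where "A = (\<Sum>i\<in>S. a i)" and "B = (\<Sum>i\<in>S. b i)"
  show ?thesis
  proof (cases "\<exists>j\<in>S. 0 < a j")
    case False
    with a have "\<And>i. i \<in> S \<Longrightarrow> a i = 0" by force
    then show ?thesis by simp
  next
    case True
    then obtain j where j: "j \<in> S" "0 < a j" by blast
    with ab b have "0 < b j" by force
    have A: "0 < A" unfolding A_def using j a \<open>finite S\<close> by (intro sum_pos2) auto
    have B: "0 < B" unfolding B_def using j \<open>0 < b j\<close> b \<open>finite S\<close> by (intro sum_pos2) auto
    have tangent: "a i - b i * A / B \<le> a i * ln (a i / b i) - a i * ln (A / B)" if "i \<in> S" for i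
    proof (cases "a i = 0")
      case True
      then show ?thesis using b[OF that] A B by simp
    next
      case False
      with a ab that b have ai: "0 < a i" and bi: "0 < b i" by force+
      have "ln (b i * A / (a i * B)) \<le> b i * A / (a i * B) - 1"
        using ai bi A B by (intro ln_le_minus_one) simp
      moreover have "ln (b i * A / (a i * B)) = ln (A / B) - ln (a i / b i)"
        using ai bi A B by (simp add: ln_div ln_mult)
      ultimately have "a i * (ln (A / B) - ln (a i / b i)) \<le> a i * (b i * A / (a i * B) - 1)"
        using ai by (intro mult_left_mono) auto
      moreover have "a i * (b i * A / (a i * B) - 1) = b i * A / B - a i"
        using ai by (simp add: field_simps)
      ultimately show ?thesis by (simp add: algebra_simps)
    qed
    have "(\<Sum>i\<in>S. a i - b i * A / B) \<le> (\<Sum>i\<in>S. a i * ln (a i / b i) - a i * ln (A / B))"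
      using tangent by (rule sum_mono)
    moreover have "(\<Sum>i\<in>S. a i - b i * A / B) = 0"
      using B by (simp add: sum_subtractf A_def B_def flip: sum_divide_distrib sum_distrib_right)
    ultimately show ?thesis
      by (simp add: sum_subtractf A_def B_def flip: sum_distrib_right)
  qed
qed

lemma ln_ratio_convex:
  fixes a1 a2 b1 b2 u v :: real
  assumes "0 \<le> a1" "0 \<le> a2" "0 \<le> b1" "0 \<le> b2" "b1 = 0 \<Longrightarrow> a1 = 0" "b2 = 0 \<Longrightarrow> a2 = 0"
    and "0 \<le> u" "0 \<le> v"
  shows "(u * a1 + v * a2) * ln ((u * a1 + v * a2) / (u * b1 + v * b2))
    \<le> u * (a1 * ln (a1 / b1)) + v * (a2 * ln (a2 / b2))"
proof -
  have scale: "(t * a) * ln ((t * a) / (t * b)) = t * (a * ln (a / b))" if "0 \<le> t" for t a b :: real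
    using that by (cases "t = 0") simp_all
  have "(\<Sum>i\<in>UNIV. if i then u * a1 else v * a2) *
      ln ((\<Sum>i\<in>UNIV. if i then u * a1 else v * a2) / (\<Sum>i\<in>UNIV. if i then u * b1 else v * b2))
    \<le> (\<Sum>i\<in>UNIV. (if i then u * a1 else v * a2) *
         ln ((if i then u * a1 else v * a2) / (if i then u * b1 else v * b2)))"
    by (rule log_sum_inequality) (use assms in auto)
  then have "(u * a1 + v * a2) * ln ((u * a1 + v * a2) / (u * b1 + v * b2))
    \<le> (u * a1) * ln ((u * a1) / (u * b1)) + (v * a2) * ln ((v * a2) / (v * b2))"
    by (simp add: UNIV_bool add.commute)
  also have "\<dots> = u * (a1 * ln (a1 / b1)) + v * (a2 * ln (a2 / b2))"
    using assms by (simp only: scale)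
  finally show ?thesis .
qed

lemma powr_tangent_le:
  fixes z0 z1 p :: real
  assumes "0 \<le> z0" "0 \<le> z1" "1 < p"
  shows "z1 powr p + p * z1 powr (p - 1) * (z0 - z1) \<le> z0 powr p"
proof (cases "z1 = 0")
  case False
  with assms have z1: "0 < z1" by simp
  then have z1p: "z1 powr (p - 1) * z1 = z1 powr p" by (simp add: powr_diff)
  show ?thesis
  proof (cases "z0 = 0")
    case True
    then show ?thesis using assms z1p mult_right_mono[of 1 p "z1 powr p"] by (simp add: algebra_simps)
  next
    case False
    with assms have z0: "0 < z0" by simp
    have "(z1 powr p) powr ((p - 1) / p) * (z0 powr p) powr (1 / p)
        \<le> ((p - 1) / p) * z1 powr p + (1 / p) * z0 powr p"
      by (rule Youngs_inequality_0) (use assms z0 z1 in \<open>auto simp: field_simps\<close>)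
    then have "z1 powr (p - 1) * z0 \<le> ((p - 1) / p) * z1 powr p + (1 / p) * z0 powr p"
      using assms z0 z1 by (simp add: powr_powr)
    then have "p * (z1 powr (p - 1) * z0) \<le> (p - 1) * z1 powr p + z0 powr p"
      using assms by (simp add: field_simps)
    with z1p show ?thesis by (simp add: algebra_simps)
  qed
qed (use assms in simp)

lemma holder_powr_sum:
  fixes q \<alpha> :: "'i \<Rightarrow> real" and \<rho> :: real
  assumes "finite S" and q: "\<And>i. i \<in> S \<Longrightarrow> 0 \<le> q i" "(\<Sum>i\<in>S. q i) = 1"
    and \<alpha>: "\<And>i. i \<in> S \<Longrightarrow> 0 \<le> \<alpha> i" and "0 \<le> \<rho>"
  shows "(\<Sum>i\<in>S. q i powr (\<rho> / (1 + \<rho>)) * \<alpha> i) \<le> (\<Sum>i\<in>S. \<alpha> i powr (1 + \<rho>)) powr (1 / (1 + \<rho>))"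
proof -
  define T where "T = (\<Sum>i\<in>S. \<alpha> i powr (1 + \<rho>))"
  define b where "b = \<rho> / (1 + \<rho>)"
  have b: "0 \<le> b" "b < 1" "1 - b = 1 / (1 + \<rho>)" using \<open>0 \<le> \<rho>\<close> by (auto simp: b_def field_simps)
  show ?thesis
  proof (cases "T = 0")
    case True
    then have "\<And>i. i \<in> S \<Longrightarrow> \<alpha> i = 0"
      using sum_nonneg_eq_0_iff[OF \<open>finite S\<close>, of "\<lambda>i. \<alpha> i powr (1 + \<rho>)"] by (simp add: T_def)
    then show ?thesis by simp
  next
    case False
    moreover have "0 \<le> T" unfolding T_def by (intro sum_nonneg) auto
    ultimately have T: "0 < T" by simp
    have root: "(\<alpha> i powr (1 + \<rho>) / T) powr (1 - b) = \<alpha> i / T powr (1 / (1 + \<rho>))" if "i \<in> S" for i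
      using \<alpha>[OF that] T \<open>0 \<le> \<rho>\<close> by (simp add: b(3) powr_divide powr_powr)
    have young: "q i powr b * (\<alpha> i powr (1 + \<rho>) / T) powr (1 - b)
        \<le> b * q i + (1 - b) * (\<alpha> i powr (1 + \<rho>) / T)" if "i \<in> S" for i
    proof (cases "q i = 0 \<or> \<alpha> i = 0 \<or> b = 0")
      case True
      then show ?thesis using b q(1)[OF that] \<alpha>[OF that] T \<open>0 \<le> \<rho>\<close> by (auto intro!: add_nonneg_nonneg)
    next
      case False
      then show ?thesis using b q(1)[OF that] \<alpha>[OF that] T \<open>0 \<le> \<rho>\<close> by (intro Youngs_inequality_0) auto
    qed
    have "(\<Sum>i\<in>S. q i powr b * \<alpha> i) / T powr (1 / (1 + \<rho>))
        = (\<Sum>i\<in>S. q i powr b * (\<alpha> i powr (1 + \<rho>) / T) powr (1 - b))"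
      by (simp add: root sum_divide_distrib)
    also have "\<dots> \<le> (\<Sum>i\<in>S. b * q i + (1 - b) * (\<alpha> i powr (1 + \<rho>) / T))"
      using young by (rule sum_mono)
    also have "\<dots> = 1"
      using T q(2) by (simp add: sum.distrib T_def flip: sum_distrib_left sum_divide_distrib)
    finally show ?thesis using T by (simp add: T_def b_def divide_le_eq)
  qed
qed

lemma is_dist_nonneg: "is_dist P \<Longrightarrow> 0 \<le> P x"
  by (simp add: is_dist_def)

lemma is_dist_sum: "is_dist P \<Longrightarrow> (\<Sum>x\<in>UNIV. P x) = 1"
  by (simp add: is_dist_def)

lemma is_dist_exists_pos:
  assumes "is_dist P" shows "\<exists>x. 0 < P x"
proof (rule ccontr)
  assume "\<nexists>x. 0 < P x"
  with assms have "P x = 0" for x by (meson is_dist_nonneg antisym not_less)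
  then show False using is_dist_sum[OF assms] by simp
qed

lemma is_dist_point: "is_dist (\<lambda>x. if x = x0 then 1 else 0)"
  by (simp add: is_dist_def)

lemma is_dist_mix:
  assumes "is_dist P" "is_dist Q" "0 \<le> u" "0 \<le> v" "u + v = 1"
  shows "is_dist (\<lambda>x. u * P x + v * Q x)"
  using assms by (simp add: is_dist_def sum.distrib flip: sum_distrib_left)

lemma sum_point_mix:
  fixes P c :: "'a::finite \<Rightarrow> real"
  shows "(\<Sum>x\<in>UNIV. ((1 - s) * P x + s * (if x = x0 then 1 else 0)) * c x)
    = (1 - s) * (\<Sum>x\<in>UNIV. P x * c x) + s * c x0"
proof -
  have "(\<Sum>x\<in>UNIV. (if x = x0 then 1 else 0) * c x) = (\<Sum>x\<in>UNIV. if x = x0 then c x else 0)"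
    by (intro sum.cong) auto
  then show ?thesis by (simp add: distrib_right sum.distrib mult.assoc flip: sum_distrib_left)
qed

lemma is_channel_nonneg: "is_channel U \<Longrightarrow> 0 \<le> U x y"
  by (simp add: is_channel_def is_dist_def)

lemma is_channel_sum: "is_channel U \<Longrightarrow> (\<Sum>y\<in>UNIV. U x y) = 1"
  by (simp add: is_channel_def is_dist_def)

lemma joint_nonneg: "is_dist P \<Longrightarrow> is_channel U \<Longrightarrow> 0 \<le> P x * U x y"
  by (simp add: is_dist_nonneg is_channel_nonneg)

lemma sum_joint: "is_dist P \<Longrightarrow> is_channel U \<Longrightarrow> (\<Sum>x\<in>UNIV. \<Sum>y\<in>UNIV. P x * U x y) = 1"
  by (simp add: is_channel_sum is_dist_sum flip: sum_distrib_left)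

lemma out_marg_nonneg: "is_dist P \<Longrightarrow> is_channel U \<Longrightarrow> 0 \<le> out_marg P U y"
  unfolding out_marg_def by (intro sum_nonneg joint_nonneg)

lemma joint_le_out_marg: "is_dist P \<Longrightarrow> is_channel U \<Longrightarrow> P x * U x y \<le> out_marg P U y"
  unfolding out_marg_def by (rule member_le_sum) (auto intro: joint_nonneg)

lemma sum_out_marg: "is_dist P \<Longrightarrow> is_channel U \<Longrightarrow> (\<Sum>y\<in>UNIV. out_marg P U y) = 1"
  unfolding out_marg_def by (subst sum.swap) (rule sum_joint)

lemma is_dist_out_marg: "is_dist P \<Longrightarrow> is_channel U \<Longrightarrow> is_dist (out_marg P U)"
  by (simp add: is_dist_def out_marg_nonneg sum_out_marg)

lemma joint_pos:
  assumes "is_dist P" "is_channel U" "0 < P x * U x y"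
  shows "0 < P x" "0 < U x y" "0 < out_marg P U y"
proof -
  have "P x \<noteq> 0" "U x y \<noteq> 0" using assms(3) by auto
  then show "0 < P x" "0 < U x y"
    using is_dist_nonneg[OF assms(1), of x] is_channel_nonneg[OF assms(2), of x y] by auto
  show "0 < out_marg P U y" using joint_le_out_marg[OF assms(1,2), of x y] assms(3) by linarith
qed

lemma out_marg_zero_imp:
  assumes "is_dist P" "is_channel U" "0 < P x" "out_marg P U y = 0"
  shows "U x y = 0"
proof -
  have "P x * U x y = 0"
    using joint_le_out_marg[OF assms(1,2), of x y] joint_nonneg[OF assms(1,2), of x y] assms(4) by simp
  with assms(3) show ?thesis by simp
qed

lemma out_marg_pos_imp:
  assumes "is_dist P" "is_channel U" "0 < out_marg P U y"
  shows "\<exists>x. 0 < P x * U x y"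
proof (rule ccontr)
  assume "\<nexists>x. 0 < P x * U x y"
  then have "P x * U x y = 0" for x by (meson joint_nonneg[OF assms(1,2)] antisym not_less)
  then have "out_marg P U y = 0" unfolding out_marg_def by (intro sum.neutral) blast
  with assms(3) show False by simp
qed

lemma compact_dists: "compact {P::'a::finite \<Rightarrow> real. is_dist P}"
proof -
  have "compact (PiE UNIV (\<lambda>_::'a. {0..1::real}))"
    using compactin_PiE[of "\<lambda>_. euclidean" UNIV "\<lambda>_::'a. {0..1::real}"]
    by (simp add: euclidean_product_topology)
  moreover have "closed {P::'a \<Rightarrow> real. is_dist P}"
    unfolding is_dist_def
    by (intro closed_Collect_conj closed_Collect_all closed_Collect_le closed_Collect_eq
        continuous_on_const continuous_on_sum continuous_on_product_coordinates)
  ultimately have "compact (PiE UNIV (\<lambda>_::'a. {0..1::real}) \<inter> {P. is_dist P})"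
    by (rule compact_Int_closed)
  moreover have "P x \<le> 1" if "is_dist P" for P :: "'a \<Rightarrow> real" and x
    using member_le_sum[of x UNIV P] that by (simp add: is_dist_def)
  then have "PiE UNIV (\<lambda>_::'a. {0..1::real}) \<inter> {P. is_dist P} = {P. is_dist P}"
    by (auto simp: is_dist_nonneg)
  ultimately show ?thesis by simp
qed

lemma compact_channels: "compact {U::'a::finite \<Rightarrow> 'b::finite \<Rightarrow> real. is_channel U}"
proof -
  have "{U::'a \<Rightarrow> 'b \<Rightarrow> real. is_channel U} = PiE UNIV (\<lambda>_. {P. is_dist P})"
    by (auto simp: is_channel_def PiE_UNIV_domain)
  moreover have "compact (PiE UNIV (\<lambda>_::'a. {P::'b \<Rightarrow> real. is_dist P}))"
    using compactin_PiE[of "\<lambda>_. euclidean" UNIV "\<lambda>_::'a. {P::'b \<Rightarrow> real. is_dist P}"]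
    by (simp add: euclidean_product_topology compact_dists)
  ultimately show ?thesis by simp
qed

lemma continuous_on_coordinate2 [continuous_intros]:
  "continuous_on S (\<lambda>U::'a \<Rightarrow> 'b \<Rightarrow> real. U x y)"
  by (rule continuous_on_product_then_coordinatewise
      [OF continuous_on_subset[OF continuous_on_product_coordinates]]) simp

definition abs_cont :: "('a::finite \<Rightarrow> real) \<Rightarrow> ('a \<Rightarrow> 'b::finite \<Rightarrow> real) \<Rightarrow> ('a \<Rightarrow> 'b \<Rightarrow> real) \<Rightarrow> bool" where
  "abs_cont P U W \<longleftrightarrow> (\<forall>x y. 0 < P x * U x y \<longrightarrow> W x y \<noteq> 0)"

definition admissible :: "('a::finite \<Rightarrow> real) \<Rightarrow> ('a \<Rightarrow> 'b::finite \<Rightarrow> real) \<Rightarrow> ('a \<Rightarrow> 'b \<Rightarrow> real) set" where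
  "admissible P W = {U. is_channel U \<and> abs_cont P U W}"

definition cond_div_real :: "('a::finite \<Rightarrow> real) \<Rightarrow> ('a \<Rightarrow> 'b::finite \<Rightarrow> real) \<Rightarrow> ('a \<Rightarrow> 'b \<Rightarrow> real) \<Rightarrow> real" where
  "cond_div_real P U W = (\<Sum>x\<in>UNIV. \<Sum>y\<in>UNIV. P x * U x y * ln (U x y / W x y))"

definition B_PU_real :: "('a::finite \<Rightarrow> real) \<Rightarrow> ('a \<Rightarrow> 'b::finite \<Rightarrow> real) \<Rightarrow> ('a \<Rightarrow> 'b \<Rightarrow> real) \<Rightarrow> real" where
  "B_PU_real P U W = (\<Sum>x\<in>UNIV. \<Sum>y\<in>UNIV. P x * U x y * - ln (W x y))"

(* The Lagrangian of the minimisation defining E_e, written with rho = lambda + mu and eta = mu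
   for the multipliers lambda, mu of the constraints I_PU <= R and I_PU + B_PU - K <= R. *)
definition lagrangian ::
    "('a::finite \<Rightarrow> real) \<Rightarrow> ('a \<Rightarrow> 'b::finite \<Rightarrow> real) \<Rightarrow> real \<Rightarrow> real \<Rightarrow> ('a \<Rightarrow> 'b \<Rightarrow> real) \<Rightarrow> real" where
  "lagrangian P W \<rho> \<eta> U = cond_div_real P U W + \<rho> * mut_info P U + \<eta> * B_PU_real P U W"

lemma cond_div_eq: "abs_cont P U W \<Longrightarrow> cond_div P U W = ereal (cond_div_real P U W)"
  by (auto simp: cond_div_def cond_div_real_def abs_cont_def intro!: sum.cong)

lemma cond_div_infinite: "\<not> abs_cont P U W \<Longrightarrow> cond_div P U W = \<infinity>"
  by (auto simp: cond_div_def abs_cont_def)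

lemma B_PU_eq: "abs_cont P U W \<Longrightarrow> B_PU P U W = ereal (B_PU_real P U W)"
  by (auto simp: B_PU_def B_PU_real_def abs_cont_def intro!: sum.cong)

lemma mut_info_eq: "mut_info P U = (\<Sum>x\<in>UNIV. \<Sum>y\<in>UNIV. P x * U x y * ln (U x y / out_marg P U y))"
  by (auto simp: mut_info_def intro!: sum.cong)

lemma abs_cont_pos:
  "is_channel W \<Longrightarrow> abs_cont P U W \<Longrightarrow> 0 < P x * U x y \<Longrightarrow> 0 < W x y"
  unfolding abs_cont_def using is_channel_nonneg[of W x y] by (simp add: less_le)

lemma self_admissible: "is_channel W \<Longrightarrow> W \<in> admissible P W"
  by (auto simp: admissible_def abs_cont_def)

lemma cond_div_real_self: "cond_div_real P W W = 0"
  unfolding cond_div_real_def by (intro sum.neutral ballI) (simp add: divide_self_if)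

lemma E_0_zero:
  assumes "is_dist P" "is_channel W" shows "E_0 W 0 0 P = 0"
proof -
  have "(\<Sum>y\<in>UNIV. \<Sum>x\<in>UNIV. P x * W x y) = 1"
    using assms by (subst sum.swap) (rule sum_joint)
  with assms show ?thesis by (simp add: E_0_def sum_nonneg joint_nonneg is_channel_nonneg)
qed

lemma sum_UNIV_prod: "(\<Sum>z\<in>UNIV. f z) = (\<Sum>x\<in>UNIV. \<Sum>y\<in>UNIV. f (x, y))"
  for f :: "'a::finite \<times> 'b::finite \<Rightarrow> 'c::comm_monoid_add"
  by (simp add: sum.cartesian_product flip: UNIV_Times_UNIV)

lemma mut_info_le_div_product:
  assumes P: "is_dist P" and U: "is_channel U" and Q: "is_dist Q"
    and QP: "\<And>x y. 0 < P x * U x y \<Longrightarrow> 0 < Q y"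
  shows "mut_info P U \<le> (\<Sum>x\<in>UNIV. \<Sum>y\<in>UNIV. P x * U x y * ln (U x y / Q y))"
proof -
  define q where "q = out_marg P U"
  have split: "P x * U x y * ln (U x y / Q y) - P x * U x y * ln (U x y / q y) = P x * U x y * ln (q y / Q y)"
    for x y
  proof (cases "0 < P x * U x y")
    case True
    then show ?thesis using joint_pos[OF P U True] QP[OF True] by (simp add: q_def ln_div algebra_simps)
  next
    case False
    with joint_nonneg[OF P U, of x y] have "P x * U x y = 0" by simp
    then show ?thesis by (simp only: mult_zero_left diff_self)
  qed
  have "(\<Sum>x\<in>UNIV. \<Sum>y\<in>UNIV. P x * U x y * ln (U x y / Q y)) - mut_info P U
      = (\<Sum>x\<in>UNIV. \<Sum>y\<in>UNIV. P x * U x y * ln (q y / Q y))"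
    unfolding mut_info_eq q_def[symmetric] by (simp only: split flip: sum_subtractf)
  also have "\<dots> = (\<Sum>y\<in>UNIV. q y * ln (q y / Q y))"
    by (subst sum.swap) (simp add: q_def out_marg_def sum_distrib_right)
  also have "\<dots> \<ge> (\<Sum>y\<in>UNIV. q y) * ln ((\<Sum>y\<in>UNIV. q y) / (\<Sum>y\<in>UNIV. Q y))"
  proof (rule log_sum_inequality)
    show "q y = 0" if "Q y = 0" for y
      using that out_marg_pos_imp[OF P U, of y] out_marg_nonneg[OF P U, of y] QP
      by (force simp: q_def)
  qed (use P U Q in \<open>auto simp: q_def out_marg_nonneg is_dist_nonneg\<close>)
  finally show ?thesis using P U Q by (simp add: q_def sum_out_marg is_dist_sum)
qed

section \<open>Weak duality\<close>

definition tilted_output :: "('a::finite \<Rightarrow> 'b::finite \<Rightarrow> real) \<Rightarrow> real \<Rightarrow> ('a \<Rightarrow> real) \<Rightarrow> 'b \<Rightarrow> real" where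
  "tilted_output W a P y = (\<Sum>x\<in>UNIV. P x * W x y powr a)"

lemma E_0_eq_tilted_output:
  "E_0 W \<rho> \<eta> P = - ln (\<Sum>y\<in>UNIV. tilted_output W ((1 + \<eta>) / (1 + \<rho>)) P y powr (1 + \<rho>))"
  by (simp add: E_0_def tilted_output_def)

lemma tilted_output_nonneg: "is_dist P \<Longrightarrow> 0 \<le> tilted_output W a P y"
  unfolding tilted_output_def by (intro sum_nonneg) (simp add: is_dist_nonneg)

lemma E_0_le_neg_ln_tilted_sum:
  fixes W :: "'a::finite \<Rightarrow> 'b::finite \<Rightarrow> real" and \<eta> :: real
  assumes P: "is_dist P" and Q: "is_dist Q" and "0 \<le> \<rho>"
  defines "a \<equiv> (1 + \<eta>) / (1 + \<rho>)"
  assumes pos: "0 < (\<Sum>y\<in>UNIV. Q y powr (\<rho> / (1 + \<rho>)) * tilted_output W a P y)"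
  shows "E_0 W \<rho> \<eta> P \<le> (1 + \<rho>) * - ln (\<Sum>y\<in>UNIV. Q y powr (\<rho> / (1 + \<rho>)) * tilted_output W a P y)"
proof -
  define S where "S = (\<Sum>y\<in>UNIV. tilted_output W a P y powr (1 + \<rho>))"
  have holder: "(\<Sum>y\<in>UNIV. Q y powr (\<rho> / (1 + \<rho>)) * tilted_output W a P y) \<le> S powr (1 / (1 + \<rho>))"
    unfolding S_def using Q \<open>0 \<le> \<rho>\<close>
    by (intro holder_powr_sum) (auto simp: is_dist_nonneg is_dist_sum tilted_output_nonneg[OF P])
  have "S \<noteq> 0" using pos holder by auto
  moreover have "0 \<le> S" by (simp add: S_def sum_nonneg)
  ultimately have S: "0 < S" by simp
  have "ln (\<Sum>y\<in>UNIV. Q y powr (\<rho> / (1 + \<rho>)) * tilted_output W a P y) \<le> ln (S powr (1 / (1 + \<rho>)))"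
    using pos S holder by (subst ln_le_cancel_iff) auto
  also have "\<dots> = ln S / (1 + \<rho>)" using S by (simp add: ln_powr)
  finally have "(1 + \<rho>) * ln (\<Sum>y\<in>UNIV. Q y powr (\<rho> / (1 + \<rho>)) * tilted_output W a P y) \<le> ln S"
    using \<open>0 \<le> \<rho>\<close> by (simp add: field_simps)
  then show ?thesis by (simp add: E_0_eq_tilted_output S_def a_def)
qed

lemma lagrangian_eq_scaled_div:
  fixes W :: "'a::finite \<Rightarrow> 'b::finite \<Rightarrow> real" and \<eta> :: real
  assumes W: "is_channel W" and P: "is_dist P" and "U \<in> admissible P W" and \<rho>: "0 \<le> \<rho>"
  defines "c \<equiv> \<lambda>x y. P x * W x y powr ((1 + \<eta>) / (1 + \<rho>)) * out_marg P U y powr (\<rho> / (1 + \<rho>))"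
  shows "lagrangian P W \<rho> \<eta> U = (1 + \<rho>) * (\<Sum>x\<in>UNIV. \<Sum>y\<in>UNIV. P x * U x y * ln (P x * U x y / c x y))"
proof -
  from assms(3) have U: "is_channel U" and ac: "abs_cont P U W" by (auto simp: admissible_def)
  define q where "q = out_marg P U"
  have per_pair: "P x * U x y * ln (U x y / W x y) + \<rho> * (P x * U x y * ln (U x y / q y))
      + \<eta> * (P x * U x y * - ln (W x y)) = (1 + \<rho>) * (P x * U x y * ln (P x * U x y / c x y))" for x y
  proof (cases "0 < P x * U x y")
    case True
    note pos = joint_pos[OF P U True] abs_cont_pos[OF W ac True]
    have "(1 + \<rho>) * ln (P x * U x y / c x y) = (1 + \<rho>) * ln (U x y)
        - ((1 + \<rho>) * ((1 + \<eta>) / (1 + \<rho>))) * ln (W x y) - ((1 + \<rho>) * (\<rho> / (1 + \<rho>))) * ln (q y)"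
      using pos by (simp add: c_def q_def ln_div ln_mult ln_powr algebra_simps)
    also have "\<dots> = (1 + \<rho>) * ln (U x y) - (1 + \<eta>) * ln (W x y) - \<rho> * ln (q y)"
      using \<rho> by simp
    finally have L: "(1 + \<rho>) * ln (P x * U x y / c x y)
        = (1 + \<rho>) * ln (U x y) - (1 + \<eta>) * ln (W x y) - \<rho> * ln (q y)" .
    have "P x * U x y * ln (U x y / W x y) + \<rho> * (P x * U x y * ln (U x y / q y))
        + \<eta> * (P x * U x y * - ln (W x y))
        = P x * U x y * ((1 + \<rho>) * ln (U x y) - (1 + \<eta>) * ln (W x y) - \<rho> * ln (q y))"
      using pos by (simp add: q_def ln_div algebra_simps)
    also have "\<dots> = (1 + \<rho>) * (P x * U x y * ln (P x * U x y / c x y))"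
      unfolding L[symmetric] by (simp add: mult_ac)
    finally show ?thesis .
  next
    case False
    with joint_nonneg[OF P U, of x y] have z: "P x * U x y = 0" by simp
    show ?thesis by (simp only: z mult_zero_left mult_zero_right add_0_right)
  qed
  have "lagrangian P W \<rho> \<eta> U = (\<Sum>x\<in>UNIV. \<Sum>y\<in>UNIV. P x * U x y * ln (U x y / W x y)
      + \<rho> * (P x * U x y * ln (U x y / q y)) + \<eta> * (P x * U x y * - ln (W x y)))"
    unfolding lagrangian_def cond_div_real_def mut_info_eq B_PU_real_def q_def
    by (simp only: sum.distrib sum_distrib_left)
  also have "\<dots> = (1 + \<rho>) * (\<Sum>x\<in>UNIV. \<Sum>y\<in>UNIV. P x * U x y * ln (P x * U x y / c x y))"
    by (simp only: per_pair sum_distrib_left)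
  finally show ?thesis .
qed

lemma E_0_le_lagrangian:
  fixes W :: "'a::finite \<Rightarrow> 'b::finite \<Rightarrow> real"
  assumes W: "is_channel W" and P: "is_dist P" and U: "U \<in> admissible P W" and \<eta>: "0 \<le> \<eta>" "\<eta> \<le> \<rho>"
  shows "E_0 W \<rho> \<eta> P \<le> lagrangian P W \<rho> \<eta> U"
proof -
  from U have ch: "is_channel U" and ac: "abs_cont P U W" by (auto simp: admissible_def)
  from \<eta> have \<rho>: "0 \<le> \<rho>" by simp
  define m c where "m z = P (fst z) * U (fst z) (snd z)"
    and "c z = P (fst z) * W (fst z) (snd z) powr ((1 + \<eta>) / (1 + \<rho>))
      * out_marg P U (snd z) powr (\<rho> / (1 + \<rho>))" for z
  have lagr: "lagrangian P W \<rho> \<eta> U = (1 + \<rho>) * (\<Sum>z\<in>UNIV. m z * ln (m z / c z))"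
    unfolding sum_UNIV_prod m_def c_def fst_conv snd_conv
    by (rule lagrangian_eq_scaled_div[OF W P U \<rho>])
  have m: "is_dist m"
    using sum_joint[OF P ch] joint_nonneg[OF P ch] by (simp add: is_dist_def sum_UNIV_prod m_def)
  have c0: "0 \<le> c z" for z using is_dist_nonneg[OF P] by (simp add: c_def)
  have c_pos: "0 < c z" if "0 < m z" for z
  proof -
    from that have j: "0 < P (fst z) * U (fst z) (snd z)" by (simp add: m_def)
    show ?thesis using joint_pos(1,3)[OF P ch j] abs_cont_pos[OF W ac j] by (simp add: c_def)
  qed
  obtain z where "0 < m z" using is_dist_exists_pos[OF m] ..
  then have C: "0 < (\<Sum>z\<in>UNIV. c z)" using c_pos c0 by (intro sum_pos2[of UNIV z]) auto
  have sum_c: "(\<Sum>z\<in>UNIV. c z) = (\<Sum>y\<in>UNIV. out_marg P U y powr (\<rho> / (1 + \<rho>))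
      * tilted_output W ((1 + \<eta>) / (1 + \<rho>)) P y)"
    unfolding sum_UNIV_prod c_def tilted_output_def sum_distrib_left
    by (subst sum.swap) (simp add: mult_ac)
  have "E_0 W \<rho> \<eta> P \<le> (1 + \<rho>) * - ln (\<Sum>z\<in>UNIV. c z)"
    unfolding sum_c using C[unfolded sum_c]
    by (rule E_0_le_neg_ln_tilted_sum[OF P is_dist_out_marg[OF P ch] \<rho>])
  also have "\<dots> \<le> (1 + \<rho>) * (\<Sum>z\<in>UNIV. m z * ln (m z / c z))"
  proof (rule mult_left_mono)
    have "(\<Sum>z\<in>UNIV. m z) * ln ((\<Sum>z\<in>UNIV. m z) / (\<Sum>z\<in>UNIV. c z)) \<le> (\<Sum>z\<in>UNIV. m z * ln (m z / c z))"
    proof (rule log_sum_inequality)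
      show "m z = 0" if "c z = 0" for z
        using that c_pos[of z] is_dist_nonneg[OF m, of z] by (auto simp: less_le)
    qed (use c0 is_dist_nonneg[OF m] in auto)
    then show "- ln (\<Sum>z\<in>UNIV. c z) \<le> (\<Sum>z\<in>UNIV. m z * ln (m z / c z))"
      using C by (simp add: is_dist_sum[OF m] ln_div)
  qed (use \<rho> in simp)
  finally show ?thesis using lagr by simp
qed

section \<open>The tilted channel\<close>

lemma exists_minimizer_powr_sum:
  fixes c :: "'a::finite \<Rightarrow> 'b::finite \<Rightarrow> real"
  assumes "\<And>x y. 0 \<le> c x y" and "0 < p"
  obtains Pm where "is_dist Pm" and "\<And>P. is_dist P \<Longrightarrow>
      (\<Sum>y\<in>UNIV. (\<Sum>x\<in>UNIV. Pm x * c x y) powr p) \<le> (\<Sum>y\<in>UNIV. (\<Sum>x\<in>UNIV. P x * c x y) powr p)"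
proof -
  have lin: "continuous_on {P. is_dist P} (\<lambda>P. \<Sum>x\<in>UNIV. P x * c x y)" for y
    by (intro continuous_on_sum continuous_on_mult continuous_on_const
        continuous_on_subset[OF continuous_on_product_coordinates]) simp
  have "continuous_on {P. is_dist P} (\<lambda>P. \<Sum>y\<in>UNIV. (\<Sum>x\<in>UNIV. P x * c x y) powr p)"
    using assms
    by (intro continuous_on_sum continuous_on_powr'[OF lin continuous_on_const])
      (auto intro!: sum_nonneg simp: is_dist_nonneg)
  then show ?thesis
    using continuous_attains_inf[OF compact_dists] is_dist_point that by blast
qed

lemma powr_sum_mix_tangent:
  fixes \<alpha> \<beta> :: "'b::finite \<Rightarrow> real"
  assumes "\<And>y. 0 \<le> \<alpha> y" "\<And>y. 0 \<le> \<beta> y" "0 < \<rho>" "0 \<le> s" "s \<le> 1"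
  defines "\<gamma> \<equiv> \<lambda>y. (1 - s) * \<alpha> y + s * \<beta> y"
  shows "(\<Sum>y\<in>UNIV. \<gamma> y powr (1 + \<rho>)) + (1 + \<rho>) * s * (\<Sum>y\<in>UNIV. \<gamma> y powr \<rho> * (\<alpha> y - \<beta> y))
    \<le> (\<Sum>y\<in>UNIV. \<alpha> y powr (1 + \<rho>))"
proof -
  have "\<gamma> y powr (1 + \<rho>) + (1 + \<rho>) * \<gamma> y powr \<rho> * (\<alpha> y - \<gamma> y) \<le> \<alpha> y powr (1 + \<rho>)" for y
    using powr_tangent_le[of "\<alpha> y" "\<gamma> y" "1 + \<rho>"] assms by (simp add: \<gamma>_def)
  moreover have "\<alpha> y - \<gamma> y = s * (\<alpha> y - \<beta> y)" for y
    by (simp add: \<gamma>_def algebra_simps)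
  ultimately have "(\<Sum>y\<in>UNIV. \<gamma> y powr (1 + \<rho>) + (1 + \<rho>) * s * (\<gamma> y powr \<rho> * (\<alpha> y - \<beta> y)))
      \<le> (\<Sum>y\<in>UNIV. \<alpha> y powr (1 + \<rho>))"
    by (intro sum_mono) (simp add: mult_ac)
  then show ?thesis by (simp add: sum.distrib sum_distrib_left)
qed

(* Moving the minimiser a step s towards the point mass at x0 cannot decrease the objective;
   dividing the tangent bound of powr_sum_mix_tangent by s and letting s tend to 0 gives the claim. *)
lemma powr_sum_minimizer_optimality:
  fixes c :: "'a::finite \<Rightarrow> 'b::finite \<Rightarrow> real"
  assumes c: "\<And>x y. 0 \<le> c x y" and \<rho>: "0 < \<rho>" and Pm: "is_dist Pm"
    and min: "\<And>P. is_dist P \<Longrightarrow>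
      (\<Sum>y\<in>UNIV. (\<Sum>x\<in>UNIV. Pm x * c x y) powr (1 + \<rho>)) \<le> (\<Sum>y\<in>UNIV. (\<Sum>x\<in>UNIV. P x * c x y) powr (1 + \<rho>))"
  shows "(\<Sum>y\<in>UNIV. (\<Sum>x\<in>UNIV. Pm x * c x y) powr (1 + \<rho>))
    \<le> (\<Sum>y\<in>UNIV. c x0 y * (\<Sum>x\<in>UNIV. Pm x * c x y) powr \<rho>)"
proof -
  define \<alpha> where "\<alpha> y = (\<Sum>x\<in>UNIV. Pm x * c x y)" for y
  define \<gamma> where "\<gamma> s y = (1 - s) * \<alpha> y + s * c x0 y" for s y
  define \<phi> where "\<phi> s = (\<Sum>y\<in>UNIV. \<gamma> s y powr \<rho> * (\<alpha> y - c x0 y))" for s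
  have \<alpha>: "0 \<le> \<alpha> y" for y
    unfolding \<alpha>_def using c is_dist_nonneg[OF Pm] by (intro sum_nonneg) auto
  have \<phi>_nonpos: "\<phi> s \<le> 0" if s: "0 < s" "s < 1" for s
  proof -
    define Ps where "Ps x = (1 - s) * Pm x + s * (if x = x0 then 1 else 0)" for x
    have "is_dist Ps"
      unfolding Ps_def using s by (intro is_dist_mix[OF Pm is_dist_point]) auto
    moreover have "(\<Sum>x\<in>UNIV. Ps x * c x y) = \<gamma> s y" for y
      unfolding Ps_def \<gamma>_def \<alpha>_def by (rule sum_point_mix)
    ultimately have "(\<Sum>y\<in>UNIV. \<alpha> y powr (1 + \<rho>)) \<le> (\<Sum>y\<in>UNIV. \<gamma> s y powr (1 + \<rho>))"
      using min[of Ps] by (simp add: \<alpha>_def)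
    moreover have "(\<Sum>y\<in>UNIV. \<gamma> s y powr (1 + \<rho>)) + (1 + \<rho>) * s * \<phi> s \<le> (\<Sum>y\<in>UNIV. \<alpha> y powr (1 + \<rho>))"
      unfolding \<phi>_def \<gamma>_def using powr_sum_mix_tangent[OF \<alpha> c \<rho>, of s] s by simp
    ultimately have "(1 + \<rho>) * s * \<phi> s \<le> 0" by simp
    then show ?thesis using \<rho> s by (simp add: mult_le_0_iff)
  qed
  have lim: "(\<phi> \<longlongrightarrow> (\<Sum>y\<in>UNIV. \<alpha> y powr \<rho> * (\<alpha> y - c x0 y))) (at_right 0)"
  proof -
    have "((\<lambda>s. \<gamma> s y) \<longlongrightarrow> \<alpha> y) (at_right 0)" for y
      unfolding \<gamma>_def by (rule tendsto_eq_intros refl)+ simp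
    moreover have "\<forall>\<^sub>F s in at_right 0. 0 \<le> \<gamma> s y" for y
      by (rule eventually_mono[OF eventually_at_right_real[of 0 "1::real"]])
        (use \<alpha> c in \<open>auto simp: \<gamma>_def intro!: add_nonneg_nonneg\<close>)
    ultimately show ?thesis
      unfolding \<phi>_def using \<rho> by (intro tendsto_intros tendsto_powr') auto
  qed
  have "(\<Sum>y\<in>UNIV. \<alpha> y powr \<rho> * (\<alpha> y - c x0 y)) \<le> 0"
  proof (rule tendsto_le[OF _ tendsto_const lim])
    show "\<forall>\<^sub>F s in at_right 0. \<phi> s \<le> 0"
      by (rule eventually_mono[OF eventually_at_right_real[of 0 "1::real"]]) (auto intro: \<phi>_nonpos)
  qed simp
  moreover have "\<alpha> y powr \<rho> * \<alpha> y = \<alpha> y powr (1 + \<rho>)" for y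
    using \<alpha>[of y] by (simp add: powr_add)
  ultimately show ?thesis by (simp add: \<alpha>_def algebra_simps sum_subtractf)
qed

definition tilted_channel ::
    "('a::finite \<Rightarrow> 'b::finite \<Rightarrow> real) \<Rightarrow> real \<Rightarrow> real \<Rightarrow> ('a \<Rightarrow> real) \<Rightarrow> 'a \<Rightarrow> 'b \<Rightarrow> real" where
  "tilted_channel W a \<rho> P x y = W x y powr a * tilted_output W a P y powr \<rho>
     / (\<Sum>y'\<in>UNIV. W x y' powr a * tilted_output W a P y' powr \<rho>)"

lemma tilted_output_powr_sum_pos:
  assumes W: "is_channel W" and P: "is_dist P"
  shows "0 < (\<Sum>y\<in>UNIV. tilted_output W a P y powr p)"
proof -
  obtain x where x: "0 < P x" using is_dist_exists_pos[OF P] ..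
  obtain y where y: "0 < W x y" using is_dist_exists_pos[of "W x"] W by (auto simp: is_channel_def)
  have "0 < P x * W x y powr a" using x y by simp
  also have "\<dots> \<le> tilted_output W a P y"
    unfolding tilted_output_def by (rule member_le_sum) (use is_dist_nonneg[OF P] in auto)
  finally show ?thesis by (intro sum_pos2[of UNIV y]) auto
qed

lemma tilted_channel_admissible:
  assumes W: "is_channel W" and Pm: "is_dist Pm"
    and kkt: "\<And>x. (\<Sum>y\<in>UNIV. tilted_output W a Pm y powr (1 + \<rho>))
      \<le> (\<Sum>y\<in>UNIV. W x y powr a * tilted_output W a Pm y powr \<rho>)"
  shows "tilted_channel W a \<rho> Pm \<in> admissible P W"
proof -
  define T where "T x = (\<Sum>y\<in>UNIV. W x y powr a * tilted_output W a Pm y powr \<rho>)" for x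
  have T: "0 < T x" for x
    unfolding T_def by (rule less_le_trans[OF tilted_output_powr_sum_pos[OF W Pm] kkt])
  have U: "tilted_channel W a \<rho> Pm x y = W x y powr a * tilted_output W a Pm y powr \<rho> / T x" for x y
    by (simp add: tilted_channel_def T_def)
  have "is_channel (tilted_channel W a \<rho> Pm)"
    unfolding is_channel_def is_dist_def U
  proof (intro allI conjI)
    show "0 \<le> W x y powr a * tilted_output W a Pm y powr \<rho> / T x" for x y using T[of x] by simp
    show "(\<Sum>y\<in>UNIV. W x y powr a * tilted_output W a Pm y powr \<rho> / T x) = 1" for x
      using T[of x] by (simp add: T_def flip: sum_divide_distrib)
  qed
  moreover have "tilted_channel W a \<rho> Pm x y = 0" if "W x y = 0" for x y by (simp add: U that)
  ultimately show ?thesis by (auto simp: admissible_def abs_cont_def)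
qed

lemma tilted_log_identity:
  fixes w \<alpha> T S \<rho> \<eta> :: real
  assumes "0 < w" "0 < \<alpha>" "0 < T" "0 < S" "0 \<le> \<rho>"
  shows "ln (w powr ((1 + \<eta>) / (1 + \<rho>)) * \<alpha> powr \<rho> / T / w)
      + \<rho> * ln (w powr ((1 + \<eta>) / (1 + \<rho>)) * \<alpha> powr \<rho> / T / (\<alpha> powr (1 + \<rho>) / S))
      + \<eta> * - ln w = \<rho> * ln S - (1 + \<rho>) * ln T"
proof -
  define a where "a = (1 + \<eta>) / (1 + \<rho>)"
  have \<eta>: "\<eta> = (1 + \<rho>) * a - 1" using assms by (simp add: a_def)
  have L1: "ln (w powr a * \<alpha> powr \<rho> / T / w) = a * ln w + \<rho> * ln \<alpha> - ln T - ln w"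
    using assms by (simp add: ln_div ln_mult ln_powr)
  have L2: "ln (w powr a * \<alpha> powr \<rho> / T / (\<alpha> powr (1 + \<rho>) / S))
      = a * ln w + \<rho> * ln \<alpha> - ln T - (1 + \<rho>) * ln \<alpha> + ln S"
    using assms by (simp add: ln_div ln_mult ln_powr)
  have "ln (w powr a * \<alpha> powr \<rho> / T / w) + \<rho> * ln (w powr a * \<alpha> powr \<rho> / T / (\<alpha> powr (1 + \<rho>) / S))
      + \<eta> * - ln w = \<rho> * ln S - (1 + \<rho>) * ln T"
    unfolding L1 L2 \<eta> by (simp add: algebra_simps)
  then show ?thesis unfolding a_def .
qed

lemma lagrangian_le_div_product:
  fixes W :: "'a::finite \<Rightarrow> 'b::finite \<Rightarrow> real"
  assumes P: "is_dist P" and U: "is_channel U" and Q: "is_dist Q"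
    and QP: "\<And>x y. 0 < P x * U x y \<Longrightarrow> 0 < Q y" and "0 \<le> \<rho>"
  shows "lagrangian P W \<rho> \<eta> U \<le> (\<Sum>x\<in>UNIV. \<Sum>y\<in>UNIV.
    P x * U x y * (ln (U x y / W x y) + \<rho> * ln (U x y / Q y) + \<eta> * - ln (W x y)))"
proof -
  have "lagrangian P W \<rho> \<eta> U \<le> cond_div_real P U W
      + \<rho> * (\<Sum>x\<in>UNIV. \<Sum>y\<in>UNIV. P x * U x y * ln (U x y / Q y)) + \<eta> * B_PU_real P U W"
    using mut_info_le_div_product[OF P U Q QP] \<open>0 \<le> \<rho>\<close> by (simp add: lagrangian_def mult_left_mono)
  also have "\<dots> = (\<Sum>x\<in>UNIV. \<Sum>y\<in>UNIV. P x * U x y * ln (U x y / W x y)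
      + \<rho> * (P x * U x y * ln (U x y / Q y)) + \<eta> * (P x * U x y * - ln (W x y)))"
    unfolding cond_div_real_def B_PU_real_def by (simp only: sum.distrib sum_distrib_left)
  also have "\<dots> = (\<Sum>x\<in>UNIV. \<Sum>y\<in>UNIV.
      P x * U x y * (ln (U x y / W x y) + \<rho> * ln (U x y / Q y) + \<eta> * - ln (W x y)))"
    by (intro sum.cong refl) (simp add: algebra_simps)
  finally show ?thesis .
qed

lemma lagrangian_tilted_channel_le:
  fixes W :: "'a::finite \<Rightarrow> 'b::finite \<Rightarrow> real" and \<eta> :: real
  assumes W: "is_channel W" and P: "is_dist P" and Pm: "is_dist Pm" and \<rho>: "0 < \<rho>"
  defines "a \<equiv> (1 + \<eta>) / (1 + \<rho>)"
  assumes kkt: "\<And>x. (\<Sum>y\<in>UNIV. tilted_output W a Pm y powr (1 + \<rho>))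
      \<le> (\<Sum>y\<in>UNIV. W x y powr a * tilted_output W a Pm y powr \<rho>)"
  shows "lagrangian P W \<rho> \<eta> (tilted_channel W a \<rho> Pm) \<le> E_0 W \<rho> \<eta> Pm"
proof -
  define \<alpha> where "\<alpha> = tilted_output W a Pm"
  define U where "U = tilted_channel W a \<rho> Pm"
  define S where "S = (\<Sum>y\<in>UNIV. \<alpha> y powr (1 + \<rho>))"
  define T where "T x = (\<Sum>y\<in>UNIV. W x y powr a * \<alpha> y powr \<rho>)" for x
  define Q where "Q y = \<alpha> y powr (1 + \<rho>) / S" for y
  have S: "0 < S" using tilted_output_powr_sum_pos[OF W Pm] by (simp add: S_def \<alpha>_def)
  have T: "S \<le> T x" "0 < T x" for x using kkt[of x] S by (auto simp: S_def T_def \<alpha>_def)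
  have U_eq: "U x y = W x y powr a * \<alpha> y powr \<rho> / T x" for x y
    by (simp add: U_def tilted_channel_def T_def \<alpha>_def)
  have "U \<in> admissible P W" unfolding U_def by (rule tilted_channel_admissible[OF W Pm kkt])
  then have U: "is_channel U" by (simp add: admissible_def)
  have U_pos: "0 < W x y" "0 < \<alpha> y" if "0 < U x y" for x y
  proof -
    from that have "W x y \<noteq> 0" "\<alpha> y \<noteq> 0" by (auto simp: U_eq)
    with is_channel_nonneg[OF W, of x y] tilted_output_nonneg[OF Pm, of W a y]
    show "0 < W x y" "0 < \<alpha> y" by (auto simp: \<alpha>_def)
  qed
  have Q: "is_dist Q" using S by (simp add: is_dist_def Q_def S_def flip: sum_divide_distrib)
  have QP: "0 < Q y" if "0 < P x * U x y" for x y
    using U_pos[OF joint_pos(2)[OF P U that]] S by (simp add: Q_def)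
  have per_pair: "P x * U x y * (ln (U x y / W x y) + \<rho> * ln (U x y / Q y) + \<eta> * - ln (W x y))
      = P x * U x y * (\<rho> * ln S - (1 + \<rho>) * ln (T x))" for x y
  proof (cases "U x y = 0")
    case False
    with is_channel_nonneg[OF U, of x y] have "0 < U x y" by simp
    then have "0 < W x y" "0 < \<alpha> y" by (rule U_pos)+
    then have "ln (U x y / W x y) + \<rho> * ln (U x y / Q y) + \<eta> * - ln (W x y)
        = \<rho> * ln S - (1 + \<rho>) * ln (T x)"
      unfolding U_eq Q_def a_def using T(2)[of x] S \<rho> by (intro tilted_log_identity) auto
    then show ?thesis by simp
  qed simp
  have "lagrangian P W \<rho> \<eta> U \<le> (\<Sum>x\<in>UNIV. \<Sum>y\<in>UNIV.
      P x * U x y * (ln (U x y / W x y) + \<rho> * ln (U x y / Q y) + \<eta> * - ln (W x y)))"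
    by (rule lagrangian_le_div_product[OF P U Q QP less_imp_le[OF \<rho>]])
  also have "\<dots> = (\<Sum>x\<in>UNIV. \<Sum>y\<in>UNIV. P x * U x y * (\<rho> * ln S - (1 + \<rho>) * ln (T x)))"
    by (simp only: per_pair)
  also have "\<dots> = (\<Sum>x\<in>UNIV. P x * (\<rho> * ln S - (1 + \<rho>) * ln (T x)))"
    using is_channel_sum[OF U]
    by (simp add: mult.assoc mult.commute[of "U _ _"] flip: sum_distrib_left sum_distrib_right)
  also have "\<dots> \<le> (\<Sum>x\<in>UNIV. P x * - ln S)"
  proof (intro sum_mono mult_left_mono is_dist_nonneg[OF P])
    fix x
    have "(1 + \<rho>) * ln S \<le> (1 + \<rho>) * ln (T x)"
      using T[of x] S \<rho> by (intro mult_left_mono) auto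
    then show "\<rho> * ln S - (1 + \<rho>) * ln (T x) \<le> - ln S" by (simp add: algebra_simps)
  qed
  also have "\<dots> = E_0 W \<rho> \<eta> Pm"
    using is_dist_sum[OF P]
    by (simp add: E_0_eq_tilted_output S_def \<alpha>_def a_def sum_negf flip: sum_distrib_right)
  finally show ?thesis by (simp add: U_def)
qed

lemma lagrangian_le_E_0:
  fixes W :: "'a::finite \<Rightarrow> 'b::finite \<Rightarrow> real"
  assumes W: "is_channel W" and P: "is_dist P" and \<eta>: "0 \<le> \<eta>" "\<eta> \<le> \<rho>"
  shows "\<exists>P' U. is_dist P' \<and> U \<in> admissible P W \<and> lagrangian P W \<rho> \<eta> U \<le> E_0 W \<rho> \<eta> P'"
proof (cases "\<rho> = 0")
  case True
  with \<eta> have "\<eta> = 0" by simp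
  with True W P show ?thesis
    by (intro exI[of _ P] exI[of _ W])
      (simp add: self_admissible lagrangian_def cond_div_real_self E_0_zero)
next
  case False
  with \<eta> have \<rho>: "0 < \<rho>" by simp
  define a where "a = (1 + \<eta>) / (1 + \<rho>)"
  obtain Pm where Pm: "is_dist Pm" and min: "\<And>P. is_dist P \<Longrightarrow>
      (\<Sum>y\<in>UNIV. (\<Sum>x\<in>UNIV. Pm x * W x y powr a) powr (1 + \<rho>))
      \<le> (\<Sum>y\<in>UNIV. (\<Sum>x\<in>UNIV. P x * W x y powr a) powr (1 + \<rho>))"
    by (rule exists_minimizer_powr_sum[of "\<lambda>x y. W x y powr a" "1 + \<rho>"]) (use \<rho> in auto)
  have kkt: "(\<Sum>y\<in>UNIV. tilted_output W a Pm y powr (1 + \<rho>))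
      \<le> (\<Sum>y\<in>UNIV. W x y powr a * tilted_output W a Pm y powr \<rho>)" for x
    using powr_sum_minimizer_optimality[of "\<lambda>x y. W x y powr a", OF _ \<rho> Pm min]
    by (simp add: tilted_output_def)
  show ?thesis
    using Pm tilted_channel_admissible[OF W Pm kkt]
      lagrangian_tilted_channel_le[OF W P Pm \<rho> kkt[unfolded a_def]]
    unfolding a_def by blast
qed

section \<open>Lagrange multipliers\<close>

definition upper_image ::
    "'u set \<Rightarrow> ('u \<Rightarrow> real) \<Rightarrow> ('u \<Rightarrow> real) \<Rightarrow> ('u \<Rightarrow> real) \<Rightarrow> (real \<times> real \<times> real) set" where
  "upper_image K f g h = {z. \<exists>U\<in>K. f U \<le> fst z \<and> g U \<le> fst (snd z) \<and> h U \<le> snd (snd z)}"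

lemma closed_upper_image:
  fixes f g h :: "'u::topological_space \<Rightarrow> real"
  assumes "compact K" "continuous_on K f" "continuous_on K g" "continuous_on K h"
  shows "closed (upper_image K f g h)"
proof -
  define orthant :: "(real \<times> real \<times> real) set"
    where "orthant = {e. 0 \<le> fst e \<and> 0 \<le> fst (snd e) \<and> 0 \<le> snd (snd e)}"
  have eq: "upper_image K f g h = (\<Union>e\<in>orthant. \<Union>z\<in>(\<lambda>U. (f U, g U, h U)) ` K. {e + z})"
  proof (intro set_eqI iffI)
    fix z assume "z \<in> upper_image K f g h"
    then obtain U where "U \<in> K" "f U \<le> fst z" "g U \<le> fst (snd z)" "h U \<le> snd (snd z)"
      by (auto simp: upper_image_def)
    then show "z \<in> (\<Union>e\<in>orthant. \<Union>z\<in>(\<lambda>U. (f U, g U, h U)) ` K. {e + z})"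
      unfolding orthant_def by (intro UN_I[of "z - (f U, g U, h U)"] UN_I[of "(f U, g U, h U)"]) auto
  qed (force simp: upper_image_def orthant_def)
  have "closed orthant"
    unfolding orthant_def by (intro closed_Collect_conj closed_Collect_le continuous_intros)
  moreover have "compact ((\<lambda>U. (f U, g U, h U)) ` K)"
    using assms by (intro compact_continuous_image continuous_on_Pair)
  ultimately show ?thesis unfolding eq by (rule closed_compact_sums)
qed

lemma convex_upper_image:
  fixes f g h :: "'u \<Rightarrow> real"
  assumes convexlike: "\<And>U1 U2 u v. U1 \<in> K \<Longrightarrow> U2 \<in> K \<Longrightarrow> 0 \<le> u \<Longrightarrow> 0 \<le> v \<Longrightarrow> u + v = 1 \<Longrightarrow>
      \<exists>U\<in>K. f U \<le> u * f U1 + v * f U2 \<and> g U \<le> u * g U1 + v * g U2 \<and> h U \<le> u * h U1 + v * h U2"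
  shows "convex (upper_image K f g h)"
proof (rule convexI)
  fix z1 z2 and u v :: real
  assume "z1 \<in> upper_image K f g h" "z2 \<in> upper_image K f g h" and uv: "0 \<le> u" "0 \<le> v" "u + v = 1"
  then obtain U1 U2 where "U1 \<in> K" "f U1 \<le> fst z1" "g U1 \<le> fst (snd z1)" "h U1 \<le> snd (snd z1)"
    and "U2 \<in> K" "f U2 \<le> fst z2" "g U2 \<le> fst (snd z2)" "h U2 \<le> snd (snd z2)"
    unfolding upper_image_def by blast
  moreover from this obtain U where "U \<in> K" "f U \<le> u * f U1 + v * f U2"
    "g U \<le> u * g U1 + v * g U2" "h U \<le> u * h U1 + v * h U2"
    using convexlike uv by blast
  moreover have "u * a1 + v * a2 \<le> u * b1 + v * b2" if "a1 \<le> b1" "a2 \<le> b2" for a1 a2 b1 b2 :: real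
    using uv that by (intro add_mono mult_left_mono) auto
  ultimately have "f U \<le> u * fst z1 + v * fst z2" "g U \<le> u * fst (snd z1) + v * fst (snd z2)"
    "h U \<le> u * snd (snd z1) + v * snd (snd z2)"
    by (meson order_trans)+
  with \<open>U \<in> K\<close> show "u *\<^sub>R z1 + v *\<^sub>R z2 \<in> upper_image K f g h"
    unfolding upper_image_def by auto
qed

lemma nonneg_if_affine_bounded_below:
  fixes k c B :: real
  assumes "\<And>s. 0 \<le> s \<Longrightarrow> c < k * s + B"
  shows "0 \<le> k"
proof (rule ccontr)
  assume "\<not> 0 \<le> k"
  then have "k * ((\<bar>B\<bar> + \<bar>c\<bar> + 1) / - k) = - (\<bar>B\<bar> + \<bar>c\<bar> + 1)" by simp
  moreover have "0 \<le> (\<bar>B\<bar> + \<bar>c\<bar> + 1) / - k" using \<open>\<not> 0 \<le> k\<close> by (intro divide_nonneg_pos) auto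
  ultimately show False using assms by fastforce
qed

lemma convexlike_lagrange_multipliers:
  fixes f g h :: "'u::topological_space \<Rightarrow> real"
  assumes K: "compact K" and cont: "continuous_on K f" "continuous_on K g" "continuous_on K h"
    and convexlike: "\<And>U1 U2 u v. U1 \<in> K \<Longrightarrow> U2 \<in> K \<Longrightarrow> 0 \<le> u \<Longrightarrow> 0 \<le> v \<Longrightarrow> u + v = 1 \<Longrightarrow>
      \<exists>U\<in>K. f U \<le> u * f U1 + v * f U2 \<and> g U \<le> u * g U1 + v * g U2 \<and> h U \<le> u * h U1 + v * h U2"
    and feasible: "\<And>U. U \<in> K \<Longrightarrow> g U \<le> 0 \<Longrightarrow> h U \<le> 0 \<Longrightarrow> t < f U"
  shows "\<exists>\<theta> \<mu>. 0 \<le> \<theta> \<and> 0 \<le> \<mu> \<and> (\<forall>U\<in>K. t < f U + \<theta> * g U + \<mu> * h U)"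
proof (cases "K = {}")
  case False
  have "(t, 0, 0) \<notin> upper_image K f g h" using feasible by (force simp: upper_image_def)
  then obtain a c where sep: "inner a (t, 0, 0) < c" "\<forall>z\<in>upper_image K f g h. c < inner a z"
    using separating_hyperplane_closed_point[OF convex_upper_image[OF convexlike] closed_upper_image[OF K cont]]
    by blast
  obtain \<alpha> \<theta> \<mu> where a: "a = (\<alpha>, \<theta>, \<mu>)" by (cases a) auto
  have key: "c < \<alpha> * (f U + s1) + \<theta> * (g U + s2) + \<mu> * (h U + s3)"
    if "U \<in> K" "0 \<le> s1" "0 \<le> s2" "0 \<le> s3" for U s1 s2 s3
  proof -
    have "(f U + s1, g U + s2, h U + s3) \<in> upper_image K f g h"
      using that unfolding upper_image_def by (intro CollectI bexI[of _ U]) auto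
    with sep(2) show ?thesis by (force simp: a)
  qed
  from False obtain U0 where U0: "U0 \<in> K" by blast
  have "0 \<le> \<alpha>" "0 \<le> \<theta>" "0 \<le> \<mu>"
    using key[OF U0, of _ 0 0] key[OF U0, of 0 _ 0] key[OF U0, of 0 0]
    by (auto intro!: nonneg_if_affine_bounded_below[of c _ "\<alpha> * f U0 + \<theta> * g U0 + \<mu> * h U0"]
        simp: algebra_simps)
  have base: "c < \<alpha> * f U + (\<theta> * g U + \<mu> * h U)" if "U \<in> K" for U
    using key[OF that, of 0 0 0] by simp
  have "\<alpha> * t < c" using sep(1) by (simp add: a)
  show ?thesis
  proof (cases "\<alpha> = 0")
    case False
    with \<open>0 \<le> \<alpha>\<close> have "0 < \<alpha>" by simp
    have "t < f U + \<theta> / \<alpha> * g U + \<mu> / \<alpha> * h U" if "U \<in> K" for U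
    proof -
      have "\<alpha> * t < \<alpha> * (f U + \<theta> / \<alpha> * g U + \<mu> / \<alpha> * h U)"
        using \<open>\<alpha> * t < c\<close> base[OF that] \<open>0 < \<alpha>\<close> by (simp add: algebra_simps)
      with \<open>0 < \<alpha>\<close> show ?thesis by simp
    qed
    with \<open>0 < \<alpha>\<close> \<open>0 \<le> \<theta>\<close> \<open>0 \<le> \<mu>\<close> show ?thesis
      by (intro exI[of _ "\<theta> / \<alpha>"] exI[of _ "\<mu> / \<alpha>"]) (auto simp: mult.commute)
  next
    case True
    \<comment> \<open>the hyperplane is horizontal: the constraints alone are bounded away from 0 on K\<close>
    with \<open>\<alpha> * t < c\<close> have "0 < c" by simp
    obtain m where m: "\<And>U. U \<in> K \<Longrightarrow> m \<le> f U"
      using continuous_attains_inf[OF K False cont(1)] by blast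
    define s where "s = (\<bar>t\<bar> + \<bar>m\<bar> + 1) / c"
    have "0 < s" using \<open>0 < c\<close> by (simp add: s_def add_pos_nonneg)
    have "t < f U + (s * \<theta>) * g U + (s * \<mu>) * h U" if "U \<in> K" for U
    proof -
      have "s * c < s * (\<theta> * g U + \<mu> * h U)"
        using base[OF that] True \<open>0 < s\<close> by (intro mult_strict_left_mono) auto
      moreover have "s * c = \<bar>t\<bar> + \<bar>m\<bar> + 1" using \<open>0 < c\<close> by (simp add: s_def)
      ultimately show ?thesis using m[OF that] by (simp add: algebra_simps)
    qed
    with \<open>0 < s\<close> \<open>0 \<le> \<theta>\<close> \<open>0 \<le> \<mu>\<close> show ?thesis
      by (intro exI[of _ "s * \<theta>"] exI[of _ "s * \<mu>"]) simp
  qed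
qed (intro exI[of _ 0], simp)

lemma is_channel_mix:
  assumes "is_channel U1" "is_channel U2" "0 \<le> u" "0 \<le> v" "u + v = 1"
  shows "is_channel (\<lambda>x y. u * U1 x y + v * U2 x y)"
  using assms is_dist_mix[of "U1 x" "U2 x" u v for x] by (simp add: is_channel_def)

lemma admissible_mix:
  assumes "is_dist P" "U1 \<in> admissible P W" "U2 \<in> admissible P W" "0 \<le> u" "0 \<le> v" "u + v = 1"
  shows "(\<lambda>x y. u * U1 x y + v * U2 x y) \<in> admissible P W"
proof -
  have "W x y \<noteq> 0" if "0 < P x * (u * U1 x y + v * U2 x y)" for x y
  proof -
    from that have "0 < u * (P x * U1 x y) + v * (P x * U2 x y)" by (simp add: algebra_simps)
    then have "0 < P x * U1 x y \<or> 0 < P x * U2 x y"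
      using assms(4,5) by (meson add_nonpos_nonpos mult_nonneg_nonpos not_less)
    then show ?thesis using assms(2,3) by (auto simp: admissible_def abs_cont_def)
  qed
  then show ?thesis
    using assms is_channel_mix[of U1 U2 u v] by (auto simp: admissible_def abs_cont_def)
qed

lemma cond_div_real_mix_le:
  assumes W: "is_channel W" and P: "is_dist P" and U: "is_channel U1" "is_channel U2"
    and uv: "0 \<le> u" "0 \<le> v" "u + v = 1"
  shows "cond_div_real P (\<lambda>x y. u * U1 x y + v * U2 x y) W \<le> u * cond_div_real P U1 W + v * cond_div_real P U2 W"
proof -
  have "(u * U1 x y + v * U2 x y) * ln ((u * U1 x y + v * U2 x y) / W x y)
      \<le> u * (U1 x y * ln (U1 x y / W x y)) + v * (U2 x y * ln (U2 x y / W x y))" for x y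
  proof (cases "W x y = 0")
    case False
    have "u * W x y + v * W x y = W x y" using uv(3) by (simp flip: distrib_right)
    with ln_ratio_convex[of "U1 x y" "U2 x y" "W x y" "W x y" u v] show ?thesis
      using False W U uv by (simp add: is_channel_nonneg)
  qed simp
  then have "P x * ((u * U1 x y + v * U2 x y) * ln ((u * U1 x y + v * U2 x y) / W x y))
      \<le> P x * (u * (U1 x y * ln (U1 x y / W x y)) + v * (U2 x y * ln (U2 x y / W x y)))" for x y
    by (rule mult_left_mono) (simp add: is_dist_nonneg[OF P])
  then have "cond_div_real P (\<lambda>x y. u * U1 x y + v * U2 x y) W
      \<le> (\<Sum>x\<in>UNIV. \<Sum>y\<in>UNIV. u * (P x * U1 x y * ln (U1 x y / W x y)) + v * (P x * U2 x y * ln (U2 x y / W x y)))"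
    unfolding cond_div_real_def by (intro sum_mono) (simp add: algebra_simps)
  also have "\<dots> = u * cond_div_real P U1 W + v * cond_div_real P U2 W"
    unfolding cond_div_real_def by (simp only: sum.distrib sum_distrib_left)
  finally show ?thesis .
qed

lemma out_marg_mix: "out_marg P (\<lambda>x y. u * U1 x y + v * U2 x y) y = u * out_marg P U1 y + v * out_marg P U2 y"
  by (simp add: out_marg_def algebra_simps sum.distrib sum_distrib_left)

lemma mut_info_mix_le:
  assumes P: "is_dist P" and U: "is_channel U1" "is_channel U2" and uv: "0 \<le> u" "0 \<le> v"
  shows "mut_info P (\<lambda>x y. u * U1 x y + v * U2 x y) \<le> u * mut_info P U1 + v * mut_info P U2"
proof -
  define q1 q2 where "q1 = out_marg P U1" and "q2 = out_marg P U2"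
  have "P x * ((u * U1 x y + v * U2 x y) * ln ((u * U1 x y + v * U2 x y) / (u * q1 y + v * q2 y)))
      \<le> P x * (u * (U1 x y * ln (U1 x y / q1 y)) + v * (U2 x y * ln (U2 x y / q2 y)))" for x y
  proof (cases "P x = 0")
    case False
    with is_dist_nonneg[OF P, of x] have "0 < P x" by simp
    then show ?thesis
      using ln_ratio_convex[of "U1 x y" "U2 x y" "q1 y" "q2 y" u v] P U uv
        out_marg_zero_imp[OF P U(1)] out_marg_zero_imp[OF P U(2)]
      by (intro mult_left_mono) (auto simp: q1_def q2_def is_channel_nonneg out_marg_nonneg)
  qed simp
  then have "mut_info P (\<lambda>x y. u * U1 x y + v * U2 x y)
      \<le> (\<Sum>x\<in>UNIV. \<Sum>y\<in>UNIV. u * (P x * U1 x y * ln (U1 x y / q1 y)) + v * (P x * U2 x y * ln (U2 x y / q2 y)))"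
    unfolding mut_info_eq out_marg_mix q1_def[symmetric] q2_def[symmetric]
    by (intro sum_mono) (simp add: algebra_simps)
  also have "\<dots> = u * mut_info P U1 + v * mut_info P U2"
    unfolding mut_info_eq q1_def q2_def by (simp only: sum.distrib sum_distrib_left)
  finally show ?thesis .
qed

lemma B_PU_real_mix:
  "B_PU_real P (\<lambda>x y. u * U1 x y + v * U2 x y) W = u * B_PU_real P U1 W + v * B_PU_real P U2 W"
proof -
  have "B_PU_real P (\<lambda>x y. u * U1 x y + v * U2 x y) W = (\<Sum>x\<in>UNIV. \<Sum>y\<in>UNIV.
      u * (P x * U1 x y * - ln (W x y)) + v * (P x * U2 x y * - ln (W x y)))"
    unfolding B_PU_real_def by (simp add: algebra_simps)
  also have "\<dots> = u * B_PU_real P U1 W + v * B_PU_real P U2 W"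
    unfolding B_PU_real_def by (simp only: sum.distrib sum_distrib_left)
  finally show ?thesis .
qed

lemma continuous_on_cond_div_real:
  assumes "is_channel W" shows "continuous_on {U. is_channel U} (\<lambda>U. cond_div_real P U W)"
proof -
  have "continuous_on {U. is_channel U} (\<lambda>U. U x y * ln (U x y / W x y))" for x y
    by (rule continuous_on_compose2[OF continuous_on_x_ln_x_div continuous_on_coordinate2])
      (auto simp: assms is_channel_nonneg)
  then show ?thesis
    unfolding cond_div_real_def mult.assoc by (intro continuous_on_sum continuous_on_mult_left)
qed

lemma continuous_on_B_PU_real: "continuous_on S (\<lambda>U. B_PU_real P U W)"
  unfolding B_PU_real_def
  by (intro continuous_on_sum continuous_on_mult_right continuous_on_mult_left continuous_on_coordinate2)

lemma continuous_on_out_marg: "continuous_on S (\<lambda>U. out_marg P U y)"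
  unfolding out_marg_def by (intro continuous_on_sum continuous_on_mult_left continuous_on_coordinate2)

lemma mut_info_eq_entropy_diff:
  assumes P: "is_dist P" and U: "is_channel U"
  shows "mut_info P U = (\<Sum>x\<in>UNIV. \<Sum>y\<in>UNIV. P x * (U x y * ln (U x y)))
    - (\<Sum>y\<in>UNIV. out_marg P U y * ln (out_marg P U y))"
proof -
  define q where "q = out_marg P U"
  have per_pair: "P x * U x y * ln (U x y / q y) = P x * (U x y * ln (U x y)) - P x * U x y * ln (q y)" for x y
  proof (cases "0 < P x * U x y")
    case True
    then show ?thesis using joint_pos[OF P U True] by (simp add: q_def ln_div algebra_simps)
  next
    case False
    with joint_nonneg[OF P U, of x y] have z: "P x * U x y = 0" by simp
    then have "P x * (U x y * ln (U x y)) = 0" by (metis mult.assoc mult_zero_left)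
    then show ?thesis by (simp only: z mult_zero_left diff_self)
  qed
  have "mut_info P U = (\<Sum>x\<in>UNIV. \<Sum>y\<in>UNIV. P x * (U x y * ln (U x y)) - P x * U x y * ln (q y))"
    unfolding mut_info_eq q_def[symmetric] by (simp only: per_pair)
  also have "\<dots> = (\<Sum>x\<in>UNIV. \<Sum>y\<in>UNIV. P x * (U x y * ln (U x y)))
      - (\<Sum>x\<in>UNIV. \<Sum>y\<in>UNIV. P x * U x y * ln (q y))"
    by (simp only: sum_subtractf)
  also have "(\<Sum>x\<in>UNIV. \<Sum>y\<in>UNIV. P x * U x y * ln (q y)) = (\<Sum>y\<in>UNIV. q y * ln (q y))"
    by (subst sum.swap) (simp add: q_def out_marg_def sum_distrib_right)
  finally show ?thesis unfolding q_def .
qed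

lemma continuous_on_mut_info:
  fixes P :: "'a::finite \<Rightarrow> real"
  assumes P: "is_dist P" shows "continuous_on {U::'a \<Rightarrow> 'b::finite \<Rightarrow> real. is_channel U} (mut_info P)"
proof -
  have "continuous_on {U::'a \<Rightarrow> 'b \<Rightarrow> real. is_channel U} (\<lambda>U. U x y * ln (U x y))" for x y
    by (rule continuous_on_compose2[OF continuous_on_x_ln_x continuous_on_coordinate2])
      (auto simp: is_channel_nonneg)
  moreover have "continuous_on {U::'a \<Rightarrow> 'b \<Rightarrow> real. is_channel U}
      (\<lambda>U. out_marg P U y * ln (out_marg P U y))" for y
    by (rule continuous_on_compose2[OF continuous_on_x_ln_x continuous_on_out_marg])
      (auto simp: P out_marg_nonneg)
  ultimately have "continuous_on {U::'a \<Rightarrow> 'b \<Rightarrow> real. is_channel U} (\<lambda>U. (\<Sum>x\<in>UNIV. \<Sum>y\<in>UNIV. P x * (U x y * ln (U x y)))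
      - (\<Sum>y\<in>UNIV. out_marg P U y * ln (out_marg P U y)))"
    by (intro continuous_on_diff continuous_on_sum continuous_on_mult_left)
  then show ?thesis
    by (rule continuous_on_eq) (simp add: mut_info_eq_entropy_diff[OF P])
qed

lemma compact_admissible:
  assumes "is_dist P" shows "compact (admissible P W)"
proof -
  have "closed {U::'a \<Rightarrow> 'b \<Rightarrow> real. 0 < P x \<and> W x y = 0 \<longrightarrow> U x y = 0}" for x y
    by (cases "0 < P x \<and> W x y = 0") (auto intro: closed_Collect_eq continuous_on_coordinate2)
  then have "closed {U::'a \<Rightarrow> 'b \<Rightarrow> real. \<forall>x y. 0 < P x \<and> W x y = 0 \<longrightarrow> U x y = 0}"
    by (intro closed_Collect_all)
  moreover have "abs_cont P U W \<longleftrightarrow> (\<forall>x y. 0 < P x \<and> W x y = 0 \<longrightarrow> U x y = 0)"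
    if "is_channel U" for U
  proof -
    have "0 < P x * U x y \<longleftrightarrow> 0 < P x \<and> U x y \<noteq> 0" for x y
      using is_dist_nonneg[OF assms, of x] is_channel_nonneg[OF that, of x y]
      by (auto simp: zero_less_mult_iff less_le)
    then show ?thesis by (auto simp: abs_cont_def)
  qed
  then have "admissible P W
      = {U. is_channel U} \<inter> {U. \<forall>x y. 0 < P x \<and> W x y = 0 \<longrightarrow> U x y = 0}"
    by (auto simp: admissible_def)
  ultimately show ?thesis by (simp add: compact_Int_closed compact_channels)
qed

lemma lagrange_multipliers_admissible:
  fixes W :: "'a::finite \<Rightarrow> 'b::finite \<Rightarrow> real"
  assumes W: "is_channel W" and P: "is_dist P"
    and feasible: "\<And>U. U \<in> admissible P W \<Longrightarrow> mut_info P U \<le> R \<Longrightarrow>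
      mut_info P U + B_PU_real P U W - K \<le> R \<Longrightarrow> t < cond_div_real P U W"
  shows "\<exists>\<rho> \<eta>. 0 \<le> \<eta> \<and> \<eta> \<le> \<rho> \<and> (\<forall>U\<in>admissible P W. t < lagrangian P W \<rho> \<eta> U - \<rho> * R - \<eta> * K)"
proof -
  have admissible_subset: "admissible P W \<subseteq> {U. is_channel U}" by (auto simp: admissible_def)
  obtain \<theta> \<mu> where "0 \<le> \<theta>" "0 \<le> \<mu>" and multipliers: "\<forall>U\<in>admissible P W. t < cond_div_real P U W
      + \<theta> * (mut_info P U - R) + \<mu> * (mut_info P U + B_PU_real P U W - K - R)"
  proof (atomize_elim, rule convexlike_lagrange_multipliers[OF compact_admissible[OF P]])
    show "continuous_on (admissible P W) (\<lambda>U. cond_div_real P U W)"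
      using continuous_on_cond_div_real[OF W] admissible_subset by (rule continuous_on_subset)
    have I: "continuous_on (admissible P W) (\<lambda>U. mut_info P U)"
      using continuous_on_mut_info[OF P] admissible_subset by (rule continuous_on_subset)
    show "continuous_on (admissible P W) (\<lambda>U. mut_info P U - R)"
      by (intro continuous_on_diff I continuous_on_const)
    show "continuous_on (admissible P W) (\<lambda>U. mut_info P U + B_PU_real P U W - K - R)"
      by (intro continuous_on_diff continuous_on_add I continuous_on_B_PU_real continuous_on_const)
    fix U1 U2 and u v :: real
    assume U: "U1 \<in> admissible P W" "U2 \<in> admissible P W" and uv: "0 \<le> u" "0 \<le> v" "u + v = 1"
    then have ch: "is_channel U1" "is_channel U2" by (auto simp: admissible_def)
    have "R = u * R + v * R" "K = u * K + v * K" using uv(3) by (simp_all flip: distrib_right)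
    then show "\<exists>U\<in>admissible P W.
        cond_div_real P U W \<le> u * cond_div_real P U1 W + v * cond_div_real P U2 W \<and>
        mut_info P U - R \<le> u * (mut_info P U1 - R) + v * (mut_info P U2 - R) \<and>
        mut_info P U + B_PU_real P U W - K - R
          \<le> u * (mut_info P U1 + B_PU_real P U1 W - K - R) + v * (mut_info P U2 + B_PU_real P U2 W - K - R)"
      using admissible_mix[OF P U uv] cond_div_real_mix_le[OF W P ch uv] mut_info_mix_le[OF P ch uv(1,2)]
        B_PU_real_mix[of P u U1 v U2 W]
      by (intro bexI[of _ "\<lambda>x y. u * U1 x y + v * U2 x y"]) (auto simp: algebra_simps)
  qed (use feasible in auto)
  show ?thesis
  proof (intro exI conjI ballI)
    fix U assume "U \<in> admissible P W"
    with multipliers show "t < lagrangian P W (\<theta> + \<mu>) \<mu> U - (\<theta> + \<mu>) * R - \<mu> * K"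
      by (auto simp: lagrangian_def algebra_simps)
  qed (use \<open>0 \<le> \<theta>\<close> \<open>0 \<le> \<mu>\<close> in auto)
qed

section \<open>Strong duality\<close>

lemma ereal_add_max_0_le_iff: "ereal i + max 0 (ereal b) \<le> ereal r \<longleftrightarrow> i \<le> r \<and> i + b \<le> r"
  by (cases "b \<le> 0") (auto simp: max_def)

definition feasible_channels ::
    "('a::finite \<Rightarrow> real) \<Rightarrow> ('a \<Rightarrow> 'b::finite \<Rightarrow> real) \<Rightarrow> real \<Rightarrow> real \<Rightarrow> ('a \<Rightarrow> 'b \<Rightarrow> real) set" where
  "feasible_channels P W R K =
    {U. is_channel U \<and> ereal (mut_info P U) + max 0 (B_PU P U W - ereal K) \<le> ereal R}"

lemma E_e_eq: "E_e W R K = (SUP P\<in>{P. is_dist P}. INF U\<in>feasible_channels P W R K. cond_div P U W)"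
  by (simp add: E_e_def feasible_channels_def)

lemma feasible_channels_iff:
  "U \<in> feasible_channels P W R K \<and> abs_cont P U W \<longleftrightarrow>
    U \<in> admissible P W \<and> mut_info P U \<le> R \<and> mut_info P U + B_PU_real P U W - K \<le> R"
  by (auto simp: feasible_channels_def admissible_def B_PU_eq ereal_add_max_0_le_iff)

lemma E_0_le_INF_cond_div:
  fixes W :: "'a::finite \<Rightarrow> 'b::finite \<Rightarrow> real"
  assumes W: "is_channel W" and P: "is_dist P" and \<eta>: "0 \<le> \<eta>" "\<eta> \<le> \<rho>"
  shows "ereal (E_0 W \<rho> \<eta> P - \<rho> * R - \<eta> * K) \<le> (INF U\<in>feasible_channels P W R K. cond_div P U W)"
proof (rule INF_greatest)
  fix U assume U: "U \<in> feasible_channels P W R K"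
  show "ereal (E_0 W \<rho> \<eta> P - \<rho> * R - \<eta> * K) \<le> cond_div P U W"
  proof (cases "abs_cont P U W")
    case True
    with U have adm: "U \<in> admissible P W" and I: "mut_info P U \<le> R"
      and IB: "mut_info P U + B_PU_real P U W - K \<le> R"
      using feasible_channels_iff by blast+
    have "(\<rho> - \<eta>) * mut_info P U \<le> (\<rho> - \<eta>) * R" using I \<eta> by (intro mult_left_mono) auto
    moreover have "\<eta> * (mut_info P U + B_PU_real P U W - K) \<le> \<eta> * R" using IB \<eta> by (intro mult_left_mono) auto
    moreover have "E_0 W \<rho> \<eta> P \<le> lagrangian P W \<rho> \<eta> U" by (rule E_0_le_lagrangian[OF W P adm \<eta>])
    ultimately show ?thesis using True by (simp add: cond_div_eq lagrangian_def algebra_simps)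
  qed (simp add: cond_div_infinite)
qed

lemma INF_cond_div_le:
  fixes W :: "'a::finite \<Rightarrow> 'b::finite \<Rightarrow> real"
  assumes W: "is_channel W" and P: "is_dist P"
    and bound: "\<And>P' \<rho> \<eta>. is_dist P' \<Longrightarrow> 0 \<le> \<eta> \<Longrightarrow> \<eta> \<le> \<rho> \<Longrightarrow> E_0 W \<rho> \<eta> P' - \<rho> * R - \<eta> * K \<le> z"
  shows "(INF U\<in>feasible_channels P W R K. cond_div P U W) \<le> ereal z"
proof (rule ccontr)
  assume "\<not> ?thesis"
  then have "ereal z < (INF U\<in>feasible_channels P W R K. cond_div P U W)" by simp
  then have z: "ereal z < cond_div P U W" if "U \<in> feasible_channels P W R K" for U
    using that by (rule less_INF_D)
  have "z < cond_div_real P U W" if "U \<in> admissible P W" "mut_info P U \<le> R"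
    "mut_info P U + B_PU_real P U W - K \<le> R" for U
    using z[of U] that feasible_channels_iff[of U P W R K] by (auto simp: cond_div_eq)
  then obtain \<rho> \<eta> where \<eta>: "0 \<le> \<eta>" "\<eta> \<le> \<rho>"
    and gap: "\<forall>U\<in>admissible P W. z < lagrangian P W \<rho> \<eta> U - \<rho> * R - \<eta> * K"
    using lagrange_multipliers_admissible[OF W P] by blast
  obtain P' U where "is_dist P'" "U \<in> admissible P W" "lagrangian P W \<rho> \<eta> U \<le> E_0 W \<rho> \<eta> P'"
    using lagrangian_le_E_0[OF W P \<eta>] by blast
  with gap bound[OF _ \<eta>] show False by force
qed

theorem lemma10:
  fixes W :: "'a::finite \<Rightarrow> 'b::finite \<Rightarrow> real" and R K :: real
  assumes "is_channel W" and "R > 0" and "K > 0"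
  shows "E_e W R K =
    (SUP P\<in>{P. is_dist P}.
       SUP \<rho>\<eta>\<in>{(\<rho>, \<eta>). 0 \<le> \<eta> \<and> \<eta> \<le> \<rho>}.
         ereal (E_0 W (fst \<rho>\<eta>) (snd \<rho>\<eta>) P - fst \<rho>\<eta> * R - snd \<rho>\<eta> * K))"
    (is "_ = ?dual")
proof (rule antisym)
  note W = \<open>is_channel W\<close>
  have dual_upper: "ereal (E_0 W \<rho> \<eta> P - \<rho> * R - \<eta> * K) \<le> ?dual"
    if "is_dist P" "0 \<le> \<eta>" "\<eta> \<le> \<rho>" for P \<rho> \<eta>
  proof (rule SUP_upper2[of P])
    show "ereal (E_0 W \<rho> \<eta> P - \<rho> * R - \<eta> * K) \<le> (SUP \<rho>\<eta>\<in>{(\<rho>, \<eta>). 0 \<le> \<eta> \<and> \<eta> \<le> \<rho>}.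
        ereal (E_0 W (fst \<rho>\<eta>) (snd \<rho>\<eta>) P - fst \<rho>\<eta> * R - snd \<rho>\<eta> * K))"
      by (rule SUP_upper2[of "(\<rho>, \<eta>)"]) (use that in auto)
  qed (use that in simp)
  show "E_e W R K \<le> ?dual"
    unfolding E_e_eq
  proof (rule SUP_least, rule ereal_le_real)
    fix P :: "'a \<Rightarrow> real" and z assume "P \<in> {P. is_dist P}" and z: "?dual \<le> ereal z"
    then show "(INF U\<in>feasible_channels P W R K. cond_div P U W) \<le> ereal z"
      by (intro INF_cond_div_le[OF W]) (use order_trans[OF dual_upper z] in force)+
  qed
  show "?dual \<le> E_e W R K"
    unfolding E_e_eq
  proof (intro SUP_least)
    fix P :: "'a \<Rightarrow> real" and \<rho>\<eta> :: "real \<times> real" assume P: "P \<in> {P. is_dist P}" and \<rho>\<eta>: "\<rho>\<eta> \<in> {(\<rho>, \<eta>). 0 \<le> \<eta> \<and> \<eta> \<le> \<rho>}"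
    then have "ereal (E_0 W (fst \<rho>\<eta>) (snd \<rho>\<eta>) P - fst \<rho>\<eta> * R - snd \<rho>\<eta> * K)
        \<le> (INF U\<in>feasible_channels P W R K. cond_div P U W)"
      by (intro E_0_le_INF_cond_div[OF W]) auto
    also have "\<dots> \<le> (SUP P\<in>{P. is_dist P}. INF U\<in>feasible_channels P W R K. cond_div P U W)"
      using P by (rule SUP_upper)
    finally show "ereal (E_0 W (fst \<rho>\<eta>) (snd \<rho>\<eta>) P - fst \<rho>\<eta> * R - snd \<rho>\<eta> * K)
        \<le> (SUP P\<in>{P. is_dist P}. INF U\<in>feasible_channels P W R K. cond_div P U W)" .
  qed
qed

end
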